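(* Let $n>1$ be an integer and let $\langle\mathscr{V},\tau,\sim,\Lambda,\mathrm{V},\Rightarrow\rangle$ be a many valued logic with exactly $n$ values (i.e. $|\mathscr{V}|=n$) whose disjunction operation $\mathrm{V}$ is commutative and associative. Suppose that the formula $(\mathfrak{p}\rightarrow\mathfrak{p})\vee\mathfrak{q}$ (for distinct atoms $\mathfrak{p},\mathfrak{q}$) is a tautology of this logic. Then for distinct atoms $\mathfrak{p}_0,\mathfrak{p}_1,\dots,\mathfrak{p}_n$, the formula $$\bigvee_{0\leqslant i<j\leqslant n}(\mathfrak{p}_i\rightarrow\mathfrak{p}_j)$$ (the disjunction of all the $\binom{n+1}{2}$ implications $\mathfrak{p}_i\rightarrow\mathfrak{p}_j$ with $i<j$, in any order and bracketing) is a tautology of this logic.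
   Context: Formulas are built from propositional atoms using $\neg,\wedge,\vee,\rightarrow$ (and the constant $\top$). A many valued logic is a tuple $\langle\mathscr{V},\tau,\sim,\Lambda,\mathrm{V},\Rightarrow\rangle$ where $\mathscr{V}$ is a set of values, $\tau\in\mathscr{V}$ is a designated element (truth), $\sim\colon\mathscr{V}\to\mathscr{V}$ and $\Lambda,\mathrm{V},\Rightarrow\colon\mathscr{V}^2\to\mathscr{V}$. A valuation is any map $\nu$ from atoms to $\mathscr{V}$, extended to formulas by $\nu(\neg\varphi)=\sim\nu(\varphi)$, $\nu(\varphi\wedge\psi)=\nu(\varphi)\,\Lambda\,\nu(\psi)$, $\nu(\varphi\vee\psi)=\nu(\varphi)\,\mathrm{V}\,\nu(\psi)$, $\nu(\varphi\rightarrow\psi)=\nu(\varphi)\Rightarrow\nu(\psi)$. A formula $\theta$ is a tautology if $\nu(\theta)=\tau$ for every valuation $\nu$. An $n$-valued logic is one with $|\mathscr{V}|=n$. *)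

theory Defs
  imports "HOL-Library.Multiset"
begin

datatype 'a form =
    Atom 'a
  | Top
  | Neg "'a form"
  | Conj "'a form" "'a form"
  | Disj "'a form" "'a form"
  | Imp "'a form" "'a form"

record 'v mvlogic =
  tru :: 'v
  neg :: "'v \<Rightarrow> 'v"
  conj :: "'v \<Rightarrow> 'v \<Rightarrow> 'v"
  disj :: "'v \<Rightarrow> 'v \<Rightarrow> 'v"
  imp :: "'v \<Rightarrow> 'v \<Rightarrow> 'v"

fun eval :: "'v mvlogic \<Rightarrow> ('a \<Rightarrow> 'v) \<Rightarrow> 'a form \<Rightarrow> 'v" where
  "eval L \<nu> (Atom x) = \<nu> x"
| "eval L \<nu> Top = tru L"
| "eval L \<nu> (Neg \<phi>) = neg L (eval L \<nu> \<phi>)"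
| "eval L \<nu> (Conj \<phi> \<psi>) = conj L (eval L \<nu> \<phi>) (eval L \<nu> \<psi>)"
| "eval L \<nu> (Disj \<phi> \<psi>) = disj L (eval L \<nu> \<phi>) (eval L \<nu> \<psi>)"
| "eval L \<nu> (Imp \<phi> \<psi>) = imp L (eval L \<nu> \<phi>) (eval L \<nu> \<psi>)"

definition tautology :: "'v mvlogic \<Rightarrow> 'a form \<Rightarrow> bool" where
  "tautology L \<theta> \<longleftrightarrow> (\<forall>\<nu>. eval L \<nu> \<theta> = tru L)"

inductive is_disj_of :: "'a form \<Rightarrow> 'a form multiset \<Rightarrow> bool" where
  leaf: "is_disj_of \<phi> {#\<phi>#}"
| node: "is_disj_of \<phi> M \<Longrightarrow> is_disj_of \<psi> N \<Longrightarrow> is_disj_of (Disj \<phi> \<psi>) (M + N)"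

definition chain_imps :: "(nat \<Rightarrow> 'a) \<Rightarrow> nat \<Rightarrow> 'a form multiset" where
  "chain_imps p n = mset [Imp (Atom (p i)) (Atom (p j)). i \<leftarrow> [0..<Suc n], j \<leftarrow> [Suc i..<Suc n]]"

end

theory Submission
  imports Defs
begin

text \<open>Under n values, some two of the n + 1 atoms p_0, ..., p_n receive the same value v,
  so one disjunct p_i \<rightarrow> p_j with i < j evaluates to v \<Rightarrow> v. Since V is commutative and
  associative, the whole disjunction has the value (v \<Rightarrow> v) V r for some r, and the
  tautology (p \<rightarrow> p) \<or> q says precisely that every such value is truth.\<close>

lemma eval_is_disj_of_member:
  assumes comm: "\<forall>x y. disj L x y = disj L y x"
    and assoc: "\<forall>x y z. disj L (disj L x y) z = disj L x (disj L y z)"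
  shows "is_disj_of \<theta> M \<Longrightarrow> \<phi> \<in># M \<Longrightarrow>
    (\<theta> = \<phi> \<and> M = {#\<phi>#}) \<or> (\<exists>r. eval L \<nu> \<theta> = disj L (eval L \<nu> \<phi>) r)"
proof (induction rule: is_disj_of.induct)
  case (leaf \<phi>')
  then show ?case by simp
next
  case (node \<theta>\<^sub>1 M \<theta>\<^sub>2 N)
  consider "\<phi> \<in># M" | "\<phi> \<in># N"
    using node.prems by auto
  then show ?case
  proof cases
    case 1
    with node.IH(1) show ?thesis
      using assoc by auto
  next
    case 2
    with node.IH(2) show ?thesis
      using comm assoc by (metis eval.simps(5))
  qed
qed

lemma disj_imp_self_eq_tru:
  assumes "p \<noteq> q" and "tautology L (Disj (Imp (Atom p) (Atom p)) (Atom q))"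
  shows "disj L (imp L v v) y = tru L"
proof -
  have "eval L (\<lambda>x. if x = q then y else v) (Disj (Imp (Atom p) (Atom p)) (Atom q)) = tru L"
    using assms(2) unfolding tautology_def by blast
  then show ?thesis
    using assms(1) by simp
qed

lemma Imp_in_chain_imps:
  assumes "i < j" and "j \<le> n"
  shows "Imp (Atom (p i)) (Atom (p j)) \<in># chain_imps p n"
  using assms unfolding chain_imps_def by (auto simp del: upt_Suc intro!: bexI[of _ i])

lemma size_chain_imps: "size (chain_imps p n) = (\<Sum>i\<le>n. n - i)"
  by (simp add: chain_imps_def length_concat comp_def sum_list_sum_nth atLeast0LessThan
      lessThan_Suc_atMost del: upt_Suc)

lemma size_chain_imps_ge: "n \<le> size (chain_imps p n)"
  unfolding size_chain_imps using member_le_sum[of 0 "{..n}" "\<lambda>i. n - i"] by simp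

lemma pigeonhole_atMost:
  fixes f :: "nat \<Rightarrow> 'v::finite"
  assumes "card (UNIV :: 'v set) \<le> n"
  obtains i j where "i < j" "j \<le> n" "f i = f j"
proof -
  have "\<not> inj_on f {..n}"
  proof
    assume "inj_on f {..n}"
    then have "card {..n} \<le> card (UNIV :: 'v set)"
      by (rule card_inj_on_le) auto
    with assms show False
      by simp
  qed
  then obtain i j where "i \<le> n" "j \<le> n" "i \<noteq> j" "f i = f j"
    unfolding inj_on_def by auto
  then show thesis
    using that by (metis linorder_neqE_nat)
qed

theorem lemma1:
  fixes L :: "'v::finite mvlogic" and n :: nat
    and p q :: 'a and ps :: "nat \<Rightarrow> 'a" and \<theta> :: "'a form"
  assumes "n > 1"
    and "card (UNIV :: 'v set) = n"
    and "\<forall>x y. disj L x y = disj L y x"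
    and "\<forall>x y z. disj L (disj L x y) z = disj L x (disj L y z)"
    and "p \<noteq> q"
    and "tautology L (Disj (Imp (Atom p) (Atom p)) (Atom q))"
    and "inj_on ps {0..n}"
    and "is_disj_of \<theta> (chain_imps ps n)"
  shows "tautology L \<theta>"
  unfolding tautology_def
proof
  fix \<nu> :: "'a \<Rightarrow> 'v"
  obtain i j where ij: "i < j" "j \<le> n" "\<nu> (ps i) = \<nu> (ps j)"
    using pigeonhole_atMost[of n "\<nu> \<circ> ps"] assms(2) by auto
  have "chain_imps ps n \<noteq> {#Imp (Atom (ps i)) (Atom (ps j))#}"
    using size_chain_imps_ge[of n ps] assms(1) by (metis size_single not_less)
  then obtain r where "eval L \<nu> \<theta> = disj L (eval L \<nu> (Imp (Atom (ps i)) (Atom (ps j)))) r"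
    using eval_is_disj_of_member[OF assms(3,4,8) Imp_in_chain_imps[OF ij(1,2)]] by blast
  then show "eval L \<nu> \<theta> = tru L"
    using ij(3) disj_imp_self_eq_tru[OF assms(5,6)] by simp
qed

end
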